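(* Let $X$ be an abelian metric group and let $f:X\to\mathbb{R}$ be a subadditive function. Suppose there exist a set $T\subset X$ and $k\in\mathbb{N}$ such that $f$ is bounded above on $T$ and the $k$-fold sum $\sum_{i=1}^k T=\{t_1+\dots+t_k: t_1,\dots,t_k\in T\}$ is shift-compact. Then $f$ is locally bounded at each point of $X$, i.e. every $x\in X$ has a neighbourhood on which $|f|$ is bounded.
   Context: An abelian metric group is an abelian topological group whose topology is given by an invariant metric. A function $f:X\to\mathbb{R}$ is subadditive if $f(x+y)\le f(x)+f(y)$ for all $x,y\in X$. A set $A\subset X$ is shift-compact if for every sequence $(x_n)_{n\in\mathbb{N}}$ tending to $0$ in $X$ there exists $x\in X$ such that the set $\{n\in\mathbb{N}: x+x_n\in A\}$ is infinite. *)

theory Defs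
  imports "HOL-Analysis.Analysis"
begin

text \<open>An abelian metric group: an abelian group carrying a metric that is
  translation invariant (this makes addition and negation continuous, so the
  metric topology is a group topology).\<close>
definition invariant_metric :: "('a::{ab_group_add, metric_space}) itself \<Rightarrow> bool" where
  "invariant_metric _ \<longleftrightarrow> (\<forall>x y z::'a. dist (x + z) (y + z) = dist x y)"

definition subadditive :: "('a::ab_group_add \<Rightarrow> real) \<Rightarrow> bool" where
  "subadditive f \<longleftrightarrow> (\<forall>x y. f (x + y) \<le> f x + f y)"

definition shift_compact :: "('a::{ab_group_add, metric_space}) set \<Rightarrow> bool" where
  "shift_compact A \<longleftrightarrow>
     (\<forall>xs::nat \<Rightarrow> 'a. xs \<longlonglongrightarrow> 0 \<longrightarrow> (\<exists>x. infinite {n. x + xs n \<in> A}))"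

definition ksum :: "nat \<Rightarrow> ('a::ab_group_add) set \<Rightarrow> 'a set" where
  "ksum k T = {sum_list ts | ts. length ts = k \<and> set ts \<subseteq> T}"

definition locally_bounded_at :: "('a::metric_space \<Rightarrow> real) \<Rightarrow> 'a \<Rightarrow> bool" where
  "locally_bounded_at f x \<longleftrightarrow> (\<exists>U. open U \<and> x \<in> U \<and> (\<exists>B. \<forall>y\<in>U. \<bar>f y\<bar> \<le> B))"

end

theory Submission
  imports Defs
begin

text \<open>Subadditivity bounds \<open>f\<close> above by \<open>k M\<close> on the \<open>k\<close>-fold sum of \<open>T\<close>. A subadditive
  function bounded above on a shift-compact set \<open>A\<close> is bounded above near \<open>0\<close>: otherwise
  some \<open>z\<^sub>n \<rightarrow> 0\<close> has \<open>f z\<^sub>n > n\<close>, and shift-compactness gives an \<open>x\<close> with \<open>x + z\<^sub>n \<in> A\<close>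
  for infinitely many \<open>n\<close>, whereas \<open>f z\<^sub>n \<le> f (x + z\<^sub>n) + f (-x)\<close> stays bounded there.
  Local boundedness everywhere follows by translation, \<open>f (x + w) \<le> f x + f w\<close> and
  \<open>f x \<le> f (x + w) + f (-w)\<close>, since the invariant metric puts \<open>w\<close> and \<open>-w\<close> equally close
  to \<open>0\<close>.\<close>

lemma subadditive_sum_list_le:
  assumes "subadditive f" and "ts \<noteq> []"
  shows "f (sum_list ts) \<le> (\<Sum>t\<leftarrow>ts. f t)"
  using assms(2)
proof (induction ts)
  case Nil
  then show ?case by simp
next
  case (Cons a ts)
  show ?case
  proof (cases "ts = []")
    case True
    then show ?thesis by simp
  next
    case False
    have "f (a + sum_list ts) \<le> f a + f (sum_list ts)"
      using assms(1) unfolding subadditive_def by blast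
    with Cons.IH[OF False] show ?thesis by simp
  qed
qed

lemma subadditive_bounded_above_ksum:
  assumes "subadditive f" and "k \<ge> 1" and "\<forall>t\<in>T. f t \<le> M"
  shows "\<forall>s\<in>ksum k T. f s \<le> real k * M"
proof
  fix s assume "s \<in> ksum k T"
  then obtain ts where ts: "s = sum_list ts" "length ts = k" "set ts \<subseteq> T"
    unfolding ksum_def by blast
  with assms(2) have "ts \<noteq> []" by auto
  have "f s \<le> (\<Sum>t\<leftarrow>ts. f t)"
    using subadditive_sum_list_le[OF assms(1) \<open>ts \<noteq> []\<close>] ts(1) by simp
  also have "\<dots> \<le> (\<Sum>t\<leftarrow>ts. M)"
    using ts(3) assms(3) by (intro sum_list_mono) auto
  also have "\<dots> = real k * M"
    using ts(2) by (simp add: sum_list_triv)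
  finally show "f s \<le> real k * M" .
qed

lemma unbounded_above_near_imp_sequence:
  fixes f :: "'a::metric_space \<Rightarrow> real"
  assumes "\<not> (\<exists>\<delta>>0. \<exists>B. \<forall>y\<in>ball a \<delta>. f y \<le> B)"
  obtains z where "z \<longlonglongrightarrow> a" and "\<And>n. f (z n) > real n"
proof -
  have "\<forall>n. \<exists>z. dist a z < inverse (real (Suc n)) \<and> f z > real n"
    using assms by (metis mem_ball not_le of_nat_0_less_iff positive_imp_inverse_positive
        zero_less_Suc)
  then obtain z where z: "\<And>n. dist a (z n) < inverse (real (Suc n))" "\<And>n. f (z n) > real n"
    by metis
  have "(\<lambda>n. dist (z n) a) \<longlonglongrightarrow> 0"
    by (rule tendsto_sandwich[OF _ _ tendsto_const LIMSEQ_inverse_real_of_nat])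
      (use z(1) in \<open>auto simp: dist_commute less_imp_le\<close>)
  then have "z \<longlonglongrightarrow> a"
    using tendsto_dist_iff by blast
  then show thesis using z(2) by (rule that)
qed

lemma subadditive_bounded_above_near_zero:
  assumes "subadditive f" and "shift_compact A" and "\<forall>s\<in>A. f s \<le> K"
  shows "\<exists>\<delta>>0. \<exists>B. \<forall>y\<in>ball 0 \<delta>. f y \<le> B"
proof (rule ccontr)
  assume "\<not> ?thesis"
  then obtain z where "z \<longlonglongrightarrow> 0" and z_large: "\<And>n. f (z n) > real n"
    using unbounded_above_near_imp_sequence by metis
  then obtain x where x: "infinite {n. x + z n \<in> A}"
    using assms(2) unfolding shift_compact_def by blast
  have "{n. x + z n \<in> A} \<subseteq> {..nat \<lceil>K + f (- x)\<rceil>}"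
  proof
    fix n assume "n \<in> {n. x + z n \<in> A}"
    then have "f (x + z n) \<le> K" using assms(3) by blast
    moreover have "f (z n) \<le> f (x + z n) + f (- x)"
      using assms(1) unfolding subadditive_def by (metis add_diff_cancel_left' diff_conv_add_uminus)
    ultimately have "real n < K + f (- x)" using z_large[of n] by linarith
    then show "n \<in> {..nat \<lceil>K + f (- x)\<rceil>}" by simp linarith
  qed
  with x show False using finite_subset by blast
qed

lemma invariant_metric_dist_diff:
  fixes x y :: "'a::{ab_group_add, metric_space}"
  assumes "invariant_metric TYPE('a)"
  shows "dist (y - x) 0 = dist y x"
  using assms unfolding invariant_metric_def by (metis diff_add_cancel diff_self)

lemma subadditive_locally_bounded:
  fixes f :: "'a::{ab_group_add, metric_space} \<Rightarrow> real"
  assumes "invariant_metric TYPE('a)" and "subadditive f"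
    and "\<delta> > 0" and B: "\<forall>y\<in>ball 0 \<delta>. f y \<le> B"
  shows "locally_bounded_at f x"
  unfolding locally_bounded_at_def
proof (intro exI conjI)
  show "open (ball x \<delta>)" and "x \<in> ball x \<delta>"
    using \<open>\<delta> > 0\<close> by simp_all
  show "\<forall>y\<in>ball x \<delta>. \<bar>f y\<bar> \<le> \<bar>f x\<bar> + \<bar>B\<bar>"
  proof
    fix y assume "y \<in> ball x \<delta>"
    define w where "w = y - x"
    have "dist 0 w < \<delta>"
      using \<open>y \<in> ball x \<delta>\<close> invariant_metric_dist_diff[OF assms(1)]
      by (simp add: w_def dist_commute)
    moreover have "dist 0 (- w) < \<delta>"
      using \<open>y \<in> ball x \<delta>\<close> invariant_metric_dist_diff[OF assms(1), of x y]
      by (simp add: w_def dist_commute)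
    ultimately have "f w \<le> B" and "f (- w) \<le> B"
      using B by simp_all
    moreover have "f y \<le> f x + f w" and "f x \<le> f y + f (- w)"
      using assms(2) unfolding subadditive_def w_def by (metis add.commute diff_add_cancel,
          metis diff_add_cancel diff_conv_add_uminus add_diff_cancel_left')
    ultimately show "\<bar>f y\<bar> \<le> \<bar>f x\<bar> + \<bar>B\<bar>" by linarith
  qed
qed

theorem theorem2p2:
  fixes f :: "'a::{ab_group_add, metric_space} \<Rightarrow> real"
    and T :: "'a set" and k :: nat
  assumes "invariant_metric TYPE('a)"
    and "subadditive f"
    and "k \<ge> 1"
    and "\<exists>M. \<forall>t\<in>T. f t \<le> M"
    and "shift_compact (ksum k T)"
  shows "\<forall>x. locally_bounded_at f x"
proof
  fix x
  obtain M where "\<forall>t\<in>T. f t \<le> M" using assms(4) by blast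
  then have "\<forall>s\<in>ksum k T. f s \<le> real k * M"
    using subadditive_bounded_above_ksum assms(2,3) by blast
  then obtain \<delta> B where "\<delta> > 0" "\<forall>y\<in>ball 0 \<delta>. f y \<le> B"
    using subadditive_bounded_above_near_zero assms(2,5) by blast
  then show "locally_bounded_at f x"
    using subadditive_locally_bounded assms(1,2) by blast
qed

end
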